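(* Let $\mathcal{A}$ be a parameter-preserving reduction algorithm (polynomial-time) for Max $k$-Weight SAT that, on input $(\Phi, k)$, only deletes a subset of the variables together with all their literals, producing $(\Phi', k)$. If $\mathrm{OPT}_{\Phi', k} \ge (1 - \delta) \cdot \mathrm{OPT}_{\Phi, k}$ for some $\delta \in (0, 1)$, then $(\mathcal{A}, \mathrm{Iden})$ is a $(1 - \delta)$-APPA, where $\mathrm{Iden}$ is the solution-lifting algorithm that outputs its input solution unchanged.
   Context: Max $k$-Weight SAT: input is a CNF formula $\Phi = (\mathcal{V}, \mathcal{C})$ with variable set $\mathcal{V}$ and a multiset $\mathcal{C}$ of clauses, plus a positive integer $k$. A solution is $Y \subseteq \mathcal{V}$ with $|Y| \le k$ (variables set to true); $\mathrm{val}_\Phi(Y)$ is the number of clauses (with multiplicity) satisfied by $Y$; $\mathrm{OPT}_{\Phi,k} = \max_{|Y|\le k}\mathrm{val}_\Phi(Y)$. A solution is $\beta$-approximate if its value is at least $\beta\cdot\mathrm{OPT}$. An $\alpha$-APPA is a pair of polynomial-time algorithms $(\mathcal{A},\mathcal{B})$ where $\mathcal{A}$ maps an instance $(I,k)$ to an instance $(I',k')$ and $\mathcal{B}$ maps any $\beta$-approximate solution of $(I',k')$ to an $\alpha\beta$-approximate solution of $(I,k)$. Parameter-preserving means $k'=k$. *)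

theory Defs
  imports Complex_Main "HOL-Library.Multiset"
begin

text \<open>A literal is a pair (variable, polarity): (x, True) is x, (x, False) is not x.
  A clause is a set of literals; a CNF formula is a variable set together with a
  multiset of clauses.\<close>

type_synonym 'v literal = "'v \<times> bool"
type_synonym 'v clause = "'v literal set"
type_synonym 'v cnf = "'v set \<times> 'v clause multiset"

definition vars :: "'v cnf \<Rightarrow> 'v set" where "vars \<Phi> = fst \<Phi>"
definition clauses :: "'v cnf \<Rightarrow> 'v clause multiset" where "clauses \<Phi> = snd \<Phi>"

definition wf_cnf :: "'v cnf \<Rightarrow> bool" where
  "wf_cnf \<Phi> \<longleftrightarrow> finite (vars \<Phi>) \<and>
     (\<forall>c \<in># clauses \<Phi>. finite c \<and> fst ` c \<subseteq> vars \<Phi>)"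

text \<open>Y = set of variables assigned true.\<close>
definition sat_clause :: "'v set \<Rightarrow> 'v clause \<Rightarrow> bool" where
  "sat_clause Y c \<longleftrightarrow> (\<exists>(x, p) \<in> c. (x \<in> Y) = p)"

definition val :: "'v cnf \<Rightarrow> 'v set \<Rightarrow> nat" where
  "val \<Phi> Y = size (filter_mset (sat_clause Y) (clauses \<Phi>))"

definition feasible :: "'v cnf \<Rightarrow> nat \<Rightarrow> 'v set \<Rightarrow> bool" where
  "feasible \<Phi> k Y \<longleftrightarrow> Y \<subseteq> vars \<Phi> \<and> card Y \<le> k"

definition OPT :: "'v cnf \<Rightarrow> nat \<Rightarrow> nat" where
  "OPT \<Phi> k = Max (val \<Phi> ` {Y. feasible \<Phi> k Y})"

definition delete_vars :: "'v set \<Rightarrow> 'v cnf \<Rightarrow> 'v cnf" where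
  "delete_vars D \<Phi> = (vars \<Phi> - D, image_mset (\<lambda>c. {l \<in> c. fst l \<notin> D}) (clauses \<Phi>))"

definition deletion_only :: "('v cnf \<Rightarrow> nat \<Rightarrow> 'v cnf \<times> nat) \<Rightarrow> bool" where
  "deletion_only \<A> \<longleftrightarrow> (\<forall>\<Phi> k. wf_cnf \<Phi> \<longrightarrow>
      (\<exists>D \<subseteq> vars \<Phi>. \<A> \<Phi> k = (delete_vars D \<Phi>, k)))"

text \<open>alpha-APPA property (polynomial running time not modelled): B receives the original
  instance and a solution of the reduced instance.\<close>
definition is_APPA ::
  "real \<Rightarrow> ('v cnf \<Rightarrow> nat \<Rightarrow> 'v cnf \<times> nat) \<Rightarrow> ('v cnf \<Rightarrow> nat \<Rightarrow> 'v set \<Rightarrow> 'v set) \<Rightarrow> bool" where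
  "is_APPA \<alpha> \<A> \<B> \<longleftrightarrow> (\<forall>\<Phi> k \<Phi>' k' Y \<beta>. wf_cnf \<Phi> \<longrightarrow> \<A> \<Phi> k = (\<Phi>', k') \<longrightarrow>
      feasible \<Phi>' k' Y \<longrightarrow> real (val \<Phi>' Y) \<ge> \<beta> * real (OPT \<Phi>' k') \<longrightarrow>
      feasible \<Phi> k (\<B> \<Phi> k Y) \<and>
      real (val \<Phi> (\<B> \<Phi> k Y)) \<ge> \<alpha> * \<beta> * real (OPT \<Phi> k))"

definition Iden :: "'v cnf \<Rightarrow> nat \<Rightarrow> 'v set \<Rightarrow> 'v set" where
  "Iden \<Phi> k Y = Y"

end

theory Submission
  imports Defs
begin

text \<open>Deleting variables never helps a clause: a literal of the reduced clause that is true
  under Y is already a literal of the original clause. Hence Y, feasible for the reduced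
  instance, is feasible for the original one with at least the same value, and the
  assumed bound on the optimum transfers the approximation ratio.\<close>

lemma vars_delete_vars [simp]: "vars (delete_vars D \<Phi>) = vars \<Phi> - D"
  by (simp add: delete_vars_def vars_def)

lemma clauses_delete_vars:
  "clauses (delete_vars D \<Phi>) = image_mset (\<lambda>c. {l \<in> c. fst l \<notin> D}) (clauses \<Phi>)"
  by (simp add: delete_vars_def clauses_def)

lemma feasible_delete_varsD:
  assumes "feasible (delete_vars D \<Phi>) k Y"
  shows "feasible \<Phi> k Y"
  using assms by (auto simp: feasible_def)

lemma val_delete_vars_le: "val (delete_vars D \<Phi>) Y \<le> val \<Phi> Y"
proof -
  let ?restrict = "\<lambda>c. {l \<in> c. fst l \<notin> D}"
  have "val (delete_vars D \<Phi>) Y = size (filter_mset (\<lambda>c. sat_clause Y (?restrict c)) (clauses \<Phi>))"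
    by (simp add: val_def clauses_delete_vars filter_mset_image_mset)
  also have "\<dots> \<le> size (filter_mset (sat_clause Y) (clauses \<Phi>))"
    by (intro size_mset_mono filter_mset_mono_strong) (auto simp: sat_clause_def)
  finally show ?thesis by (simp add: val_def)
qed

lemma approximation_ratio_trans:
  fixes \<alpha> \<beta> opt opt' v' v :: real
  assumes "0 \<le> \<alpha>" and "0 \<le> opt" and "0 \<le> v'"
    and "\<alpha> * opt \<le> opt'" and "\<beta> * opt' \<le> v'" and "v' \<le> v"
  shows "\<alpha> * \<beta> * opt \<le> v"
proof (cases "\<beta> \<le> 0")
  case True
  then have "\<alpha> * \<beta> * opt \<le> 0"
    using assms(1,2) by (simp add: mult_nonneg_nonpos mult_nonpos_nonneg)
  then show ?thesis using assms(3,6) by linarith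
next
  case False
  then have "\<alpha> * \<beta> * opt \<le> \<beta> * opt'"
    using assms(4) by (simp add: mult.commute mult.left_commute mult_left_mono)
  then show ?thesis using assms(5,6) by linarith
qed

theorem lemma2p4:
  fixes \<A> :: "'v cnf \<Rightarrow> nat \<Rightarrow> 'v cnf \<times> nat" and \<delta> :: real
  assumes "deletion_only \<A>"
    and "0 < \<delta>" and "\<delta> < 1"
    and "\<forall>\<Phi> k. wf_cnf \<Phi> \<longrightarrow>
           real (OPT (fst (\<A> \<Phi> k)) k) \<ge> (1 - \<delta>) * real (OPT \<Phi> k)"
  shows "is_APPA (1 - \<delta>) \<A> Iden"
  unfolding is_APPA_def Iden_def
proof (intro allI impI conjI)
  fix \<Phi> k \<Phi>' k' Y and \<beta> :: real
  assume wf: "wf_cnf \<Phi>" and reduce: "\<A> \<Phi> k = (\<Phi>', k')" and feas: "feasible \<Phi>' k' Y"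
    and approx: "\<beta> * real (OPT \<Phi>' k') \<le> real (val \<Phi>' Y)"
  obtain D where "\<A> \<Phi> k = (delete_vars D \<Phi>, k)"
    using assms(1) wf unfolding deletion_only_def by blast
  with reduce have \<Phi>': "\<Phi>' = delete_vars D \<Phi>" and "k' = k" by auto
  show "feasible \<Phi> k Y"
    using feas feasible_delete_varsD by (simp add: \<Phi>' \<open>k' = k\<close>)
  have "(1 - \<delta>) * real (OPT \<Phi> k) \<le> real (OPT \<Phi>' k')"
    using assms(4) wf reduce by (metis fst_conv \<open>k' = k\<close>)
  moreover have "val \<Phi>' Y \<le> val \<Phi> Y"
    unfolding \<Phi>' by (rule val_delete_vars_le)
  ultimately show "(1 - \<delta>) * \<beta> * real (OPT \<Phi> k) \<le> real (val \<Phi> Y)"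
    using approx assms(3)
    by (intro approximation_ratio_trans[where opt' = "real (OPT \<Phi>' k')" and v' = "real (val \<Phi>' Y)"])
      auto
qed

end
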